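(* Let $Z$ and $W$ be random variables with $P(Z>u)>0$ and $P(W>u)>0$ for all $u>0$, and let $Y$ be a random variable independent of $Z$ and of $W$ satisfying condition $(\mathrm{P})$. If $\lim_{u\to\infty}P(Z>u)/P(W>u)=1$, then $\lim_{u\to\infty}P(Y+Z>u)/P(Y+W>u)=1$; if $\lim_{u\to\infty}P(Z>u)/P(W>u)=0$, then $\lim_{u\to\infty}P(Y+Z>u)/P(Y+W>u)=0$.
   Context: A random variable $Y$ satisfies condition $(\mathrm{P})$ if $P(Y>u)>0$ for all $u>0$ and there is a constant $a>0$ with $\lim_{u\to\infty}P(Y>u+a)/P(Y>u)=0$. *)

theory Defs
  imports "HOL-Probability.Probability"
begin

definition condition_P :: "'a measure \<Rightarrow> ('a \<Rightarrow> real) \<Rightarrow> bool" where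
  "condition_P M Y \<longleftrightarrow>
     (\<forall>u>0. measure M {x \<in> space M. Y x > u} > 0) \<and>
     (\<exists>a>0. ((\<lambda>u. measure M {x \<in> space M. Y x > u + a} / measure M {x \<in> space M. Y x > u})
              \<longlongrightarrow> 0) at_top)"

end

theory Submission
  imports Defs
begin

(* Write F_V(t) = P(V > t).  For Y independent of V the tail of Y + V is the
   convolution  P(Y + V > u) = E[F_V(u - Y)]  (sum_tail_convolution), which gives
   - an upper estimate: if F_Z(t) <= K F_W(t) for t >= c, then
       P(Y + Z > u) <= K P(Y + W > u) + P(Y > u - c)        (sum_tail_upper);
   - a lower estimate: P(V > d) P(Y > u - d) <= P(Y + V > u) (sum_tail_lower).
   Condition (P) says that shifting the tail of Y by a fixed amount a makes it
   negligible; with the lower estimate this shows P(Y > u - c) = o(P(Y + W > u))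
   (shifted_tail_negligible).  Hence every eventual bound F_Z <= K F_W with
   K > lim F_Z/F_W transfers to the sums (sum_tail_bound). *)

lemma eventually_ratio_less:
  fixes f g :: "'b \<Rightarrow> real"
  assumes bound: "\<And>K. K > L \<Longrightarrow> eventually (\<lambda>u. f u \<le> K * g u \<and> g u > 0) F"
    and "L < b"
  shows "eventually (\<lambda>u. f u / g u < b \<and> g u > 0) F"
proof -
  have "L < (L + b) / 2" "(L + b) / 2 < b" using \<open>L < b\<close> by simp_all
  from bound[OF this(1)] show ?thesis
  proof (rule eventually_mono)
    fix u assume "f u \<le> (L + b) / 2 * g u \<and> g u > 0"
    then have "f u / g u \<le> (L + b) / 2" "g u > 0" by (simp_all add: divide_le_eq)
    with \<open>(L + b) / 2 < b\<close> show "f u / g u < b \<and> g u > 0" by linarith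
  qed
qed

lemma tendsto_ratio_zero:
  fixes f g :: "'b \<Rightarrow> real"
  assumes bound: "\<And>K. K > 0 \<Longrightarrow> eventually (\<lambda>u. f u \<le> K * g u \<and> g u > 0) F"
    and nonneg: "\<And>u. f u \<ge> 0"
  shows "((\<lambda>u. f u / g u) \<longlongrightarrow> 0) F"
proof (rule order_tendstoI)
  fix a :: real assume "a < 0"
  show "eventually (\<lambda>u. a < f u / g u) F"
  proof (rule eventually_mono[OF bound[OF zero_less_one]])
    fix u assume "f u \<le> 1 * g u \<and> g u > 0"
    then have "0 \<le> f u / g u" using nonneg[of u] by simp
    with \<open>a < 0\<close> show "a < f u / g u" by linarith
  qed
next
  fix b :: real assume "0 < b"
  have "eventually (\<lambda>u. f u / g u < b \<and> g u > 0) F"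
    using \<open>0 < b\<close> by (intro eventually_ratio_less bound)
  then show "eventually (\<lambda>u. f u / g u < b) F" by (rule eventually_mono) simp
qed

lemma tendsto_ratio_one:
  fixes f g :: "'b \<Rightarrow> real"
  assumes upper: "\<And>K. K > 1 \<Longrightarrow> eventually (\<lambda>u. f u \<le> K * g u \<and> g u > 0) F"
    and lower: "\<And>K. K > 1 \<Longrightarrow> eventually (\<lambda>u. g u \<le> K * f u \<and> f u > 0) F"
  shows "((\<lambda>u. f u / g u) \<longlongrightarrow> 1) F"
proof (rule order_tendstoI)
  fix a :: real assume "a < 1"
  have "eventually (\<lambda>u. f u \<le> 2 * g u \<and> g u > 0) F"
    and "eventually (\<lambda>u. g u \<le> 2 * f u \<and> f u > 0) F" by (simp_all add: upper lower)
  then have pos: "eventually (\<lambda>u. f u > 0 \<and> g u > 0) F"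
    by eventually_elim simp
  show "eventually (\<lambda>u. a < f u / g u) F"
  proof (cases "a > 0")
    case True
    then have "1 < 1 / a" using \<open>a < 1\<close> by simp
    then have "eventually (\<lambda>u. g u / f u < 1 / a \<and> f u > 0) F"
      by (intro eventually_ratio_less lower)
    with pos show ?thesis
    proof eventually_elim
      case (elim u)
      then have "g u / f u < 1 / a" "f u > 0" "g u > 0" by simp_all
      then have "a * g u < f u" using True by (simp add: field_simps)
      then show "a < f u / g u" using \<open>g u > 0\<close> by (simp add: less_divide_eq)
    qed
  next
    case False
    from pos show ?thesis
      by eventually_elim (use False in \<open>simp add: not_less order.strict_trans1\<close>)
  qed
next
  fix b :: real assume "1 < b"
  have "eventually (\<lambda>u. f u / g u < b \<and> g u > 0) F"
    using \<open>1 < b\<close> by (intro eventually_ratio_less upper)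
  then show "eventually (\<lambda>u. f u / g u < b) F" by (rule eventually_mono) simp
qed

context prob_space
begin

lemma sum_tail_convolution:
  fixes Y V :: "'a \<Rightarrow> real"
  assumes Y: "Y \<in> borel_measurable M" and V: "V \<in> borel_measurable M"
    and ind: "indep_var borel Y borel V"
  shows "emeasure M {x\<in>space M. Y x + V x > u}
       = (\<integral>\<^sup>+y. emeasure M {x\<in>space M. V x > u - y} \<partial>(distr M borel Y))"
proof -
  define S where "S = {p::real \<times> real. fst p + snd p > u}"
  have S: "S \<in> sets (borel \<Otimes>\<^sub>M borel)"
  proof -
    have "{p\<in>space (borel \<Otimes>\<^sub>M borel). u < fst p + (snd p::real)} \<in> sets (borel \<Otimes>\<^sub>M borel)"
      by measurable
    then show ?thesis unfolding S_def by (simp add: space_pair_measure)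
  qed
  have YV: "(\<lambda>x. (Y x, V x)) \<in> measurable M (borel \<Otimes>\<^sub>M borel)" using Y V by measurable
  interpret V_distr: prob_space "distr M borel V" using V by (rule prob_space_distr)
  have "emeasure M {x\<in>space M. Y x + V x > u} = emeasure (distr M (borel \<Otimes>\<^sub>M borel) (\<lambda>x. (Y x, V x))) S"
    by (subst emeasure_distr[OF YV S]) (auto simp: S_def intro!: arg_cong[where f="emeasure M"])
  also have "distr M (borel \<Otimes>\<^sub>M borel) (\<lambda>x. (Y x, V x)) = distr M borel Y \<Otimes>\<^sub>M distr M borel V"
    using ind unfolding indep_var_distribution_eq by simp
  also have "emeasure (distr M borel Y \<Otimes>\<^sub>M distr M borel V) S
      = (\<integral>\<^sup>+y. emeasure (distr M borel V) (Pair y -` S) \<partial>(distr M borel Y))"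
    by (rule V_distr.emeasure_pair_measure_alt) (use S in simp)
  also have "\<dots> = (\<integral>\<^sup>+y. emeasure M {x\<in>space M. V x > u - y} \<partial>(distr M borel Y))"
  proof (rule nn_integral_cong)
    fix y
    have "Pair y -` S = {u - y<..}" by (auto simp: S_def)
    then show "emeasure (distr M borel V) (Pair y -` S) = emeasure M {x\<in>space M. V x > u - y}"
      using V by (simp add: emeasure_distr) (auto intro!: arg_cong[where f="emeasure M"])
  qed
  finally show ?thesis .
qed

(* The integrand of the convolution formula is monotone in y, hence Borel. *)
lemma shifted_tail_borel_measurable:
  fixes V :: "'a \<Rightarrow> real"
  assumes V: "V \<in> borel_measurable M"
  shows "(\<lambda>y. emeasure M {x\<in>space M. V x > u - y}) \<in> borel_measurable borel"
proof -
  have "mono (\<lambda>y. prob {x\<in>space M. V x > u - y})"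
    by (rule monoI, rule finite_measure_mono) (use V in auto)
  then have "(\<lambda>y. prob {x\<in>space M. V x > u - y}) \<in> borel_measurable borel"
    by (rule borel_measurable_mono)
  then show ?thesis by (simp add: emeasure_eq_measure)
qed

(* Upper estimate: a bound F_Z <= K F_W beyond c transfers to the sums up to
   the error P(Y > u - c), which accounts for the values of Y where u - Y < c. *)
lemma sum_tail_upper:
  fixes Y Z W :: "'a \<Rightarrow> real"
  assumes Y: "Y \<in> borel_measurable M" and Z: "Z \<in> borel_measurable M" and W: "W \<in> borel_measurable M"
    and indZ: "indep_var borel Y borel Z" and indW: "indep_var borel Y borel W"
    and K: "K \<ge> 0"
    and dom: "\<And>t. t \<ge> c \<Longrightarrow> prob {x\<in>space M. Z x > t} \<le> K * prob {x\<in>space M. W x > t}"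
  shows "prob {x\<in>space M. Y x + Z x > u}
           \<le> K * prob {x\<in>space M. Y x + W x > u} + prob {x\<in>space M. Y x > u - c}"
proof -
  have "ennreal (prob {x\<in>space M. Y x + Z x > u})
      = (\<integral>\<^sup>+y. emeasure M {x\<in>space M. Z x > u - y} \<partial>(distr M borel Y))"
    using sum_tail_convolution[OF Y Z indZ] by (simp add: emeasure_eq_measure)
  also have "\<dots> \<le> (\<integral>\<^sup>+y. ennreal K * emeasure M {x\<in>space M. W x > u - y}
                          + indicator {u - c<..} y \<partial>(distr M borel Y))"
  proof (rule nn_integral_mono)
    fix y
    show "emeasure M {x\<in>space M. Z x > u - y}
          \<le> ennreal K * emeasure M {x\<in>space M. W x > u - y} + indicator {u - c<..} y"
    proof (cases "u - y \<ge> c")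
      case True
      then have "ennreal (prob {x\<in>space M. Z x > u - y})
                   \<le> ennreal K * ennreal (prob {x\<in>space M. W x > u - y})"
        using dom K by (simp add: ennreal_mult[symmetric] ennreal_leI)
      then show ?thesis by (simp add: emeasure_eq_measure add_increasing2)
    next
      case False
      then show ?thesis using emeasure_le_1 by (simp add: add_increasing)
    qed
  qed
  also have "\<dots> = ennreal K * (\<integral>\<^sup>+y. emeasure M {x\<in>space M. W x > u - y} \<partial>(distr M borel Y))
                   + emeasure (distr M borel Y) {u - c<..}"
    using shifted_tail_borel_measurable[OF W]
    by (subst nn_integral_add) (auto simp: nn_integral_cmult)
  also have "\<dots> = ennreal (K * prob {x\<in>space M. Y x + W x > u} + prob {x\<in>space M. Y x > u - c})"
    using sum_tail_convolution[OF Y W indW] Y K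
    by (simp add: emeasure_distr emeasure_eq_measure vimage_def Int_def conj_commute
        ennreal_mult ennreal_plus)
  finally show ?thesis
    by (rule ennreal_le_iff[THEN iffD1, rotated]) (use K in simp)
qed

(* Lower estimate: Y + V > u whenever V > d and Y > u - d. *)
lemma sum_tail_lower:
  fixes Y V :: "'a \<Rightarrow> real"
  assumes Y: "Y \<in> borel_measurable M" and V: "V \<in> borel_measurable M"
    and ind: "indep_var borel Y borel V"
  shows "prob {x\<in>space M. V x > d} * prob {x\<in>space M. Y x > u - d} \<le> prob {x\<in>space M. Y x + V x > u}"
proof -
  have "ennreal (prob {x\<in>space M. V x > d} * prob {x\<in>space M. Y x > u - d})
      = (\<integral>\<^sup>+y. ennreal (prob {x\<in>space M. V x > d}) * indicator {u - d<..} y \<partial>(distr M borel Y))"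
    using Y by (simp add: nn_integral_cmult_indicator ennreal_mult emeasure_distr
        emeasure_eq_measure vimage_def Int_def conj_commute)
  also have "\<dots> \<le> (\<integral>\<^sup>+y. emeasure M {x\<in>space M. V x > u - y} \<partial>(distr M borel Y))"
  proof (rule nn_integral_mono)
    fix y
    show "ennreal (prob {x\<in>space M. V x > d}) * indicator {u - d<..} y
            \<le> emeasure M {x\<in>space M. V x > u - y}"
    proof (cases "y > u - d")
      case True
      have "prob {x\<in>space M. V x > d} \<le> prob {x\<in>space M. V x > u - y}"
        by (rule finite_measure_mono) (use True V in auto)
      then show ?thesis using True by (simp add: emeasure_eq_measure)
    qed simp
  qed
  also have "\<dots> = ennreal (prob {x\<in>space M. Y x + V x > u})"
    using sum_tail_convolution[OF Y V ind] by (simp add: emeasure_eq_measure)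
  finally show ?thesis by (simp add: ennreal_le_iff)
qed

(* Condition (P) makes P(Y > u - c) negligible against the tail of Y + V for any
   V with unbounded support: with d = |c| + a, the lower estimate gives
   P(Y + V > u) >= P(V > d) P(Y > u - d), while P(Y > u - c) <= P(Y > u - d + a)
   is a vanishing fraction of P(Y > u - d). *)
lemma shifted_tail_negligible:
  fixes Y V :: "'a \<Rightarrow> real"
  assumes Y: "Y \<in> borel_measurable M" and V: "V \<in> borel_measurable M"
    and ind: "indep_var borel Y borel V" and P: "condition_P M Y"
    and V_pos: "\<forall>t>0. prob {x\<in>space M. V x > t} > 0" and "\<delta> > 0"
  shows "eventually (\<lambda>u. prob {x\<in>space M. Y x > u - c} \<le> \<delta> * prob {x\<in>space M. Y x + V x > u}
            \<and> prob {x\<in>space M. Y x + V x > u} > 0) at_top"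
proof -
  obtain a where "a > 0" and lim:
    "((\<lambda>v. prob {x\<in>space M. Y x > v + a} / prob {x\<in>space M. Y x > v}) \<longlongrightarrow> 0) at_top"
    using P unfolding condition_P_def by blast
  have Y_pos: "\<And>v. v > 0 \<Longrightarrow> prob {x\<in>space M. Y x > v} > 0"
    using P unfolding condition_P_def by blast
  define d where "d = \<bar>c\<bar> + a"
  define q where "q = prob {x\<in>space M. V x > d}"
  have "q > 0" using V_pos \<open>a > 0\<close> by (simp add: q_def d_def)
  have "eventually (\<lambda>v. prob {x\<in>space M. Y x > v + a} / prob {x\<in>space M. Y x > v} < \<delta> * q
                         \<and> v > 0) at_top"
    using \<open>\<delta> > 0\<close> \<open>q > 0\<close> by (intro eventually_conj order_tendstoD(2)[OF lim] eventually_gt_at_top) simp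
  moreover have "filterlim (\<lambda>u. u - d) at_top at_top"
    by (rule filterlim_tendsto_add_at_top[OF tendsto_const filterlim_ident, of "-d", simplified])
  ultimately have "eventually (\<lambda>u. prob {x\<in>space M. Y x > u - d + a} / prob {x\<in>space M. Y x > u - d}
                                   < \<delta> * q \<and> u - d > 0) at_top"
    by (rule eventually_compose_filterlim)
  then show ?thesis
  proof eventually_elim
    case (elim u)
    then have Y_tail: "prob {x\<in>space M. Y x > u - d} > 0" using Y_pos by simp
    then have small: "prob {x\<in>space M. Y x > u - d + a} \<le> \<delta> * q * prob {x\<in>space M. Y x > u - d}"
      using elim by (simp add: divide_less_eq less_imp_le)
    have low: "q * prob {x\<in>space M. Y x > u - d} \<le> prob {x\<in>space M. Y x + V x > u}"
      unfolding q_def by (rule sum_tail_lower[OF Y V ind])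
    have "prob {x\<in>space M. Y x > u - c} \<le> prob {x\<in>space M. Y x > u - d + a}"
      by (rule finite_measure_mono) (use Y in \<open>auto simp: d_def\<close>)
    also have "\<dots> \<le> \<delta> * (q * prob {x\<in>space M. Y x > u - d})" using small by simp
    also have "\<dots> \<le> \<delta> * prob {x\<in>space M. Y x + V x > u}" using low \<open>\<delta> > 0\<close> by simp
    moreover have "0 < q * prob {x\<in>space M. Y x > u - d}" using \<open>q > 0\<close> Y_tail by simp
    ultimately show ?case using low by linarith
  qed
qed

(* Split K - L in two
   halves: one for the bound on the tails themselves, one for the error term. *)
lemma sum_tail_bound:
  fixes Y Z W :: "'a \<Rightarrow> real"
  assumes Y: "Y \<in> borel_measurable M" and Z: "Z \<in> borel_measurable M" and W: "W \<in> borel_measurable M"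
    and indZ: "indep_var borel Y borel Z" and indW: "indep_var borel Y borel W"
    and P: "condition_P M Y" and W_pos: "\<forall>t>0. prob {x\<in>space M. W x > t} > 0"
    and lim: "((\<lambda>t. prob {x\<in>space M. Z x > t} / prob {x\<in>space M. W x > t}) \<longlongrightarrow> L) at_top"
    and "L < K"
  shows "eventually (\<lambda>u. prob {x\<in>space M. Y x + Z x > u} \<le> K * prob {x\<in>space M. Y x + W x > u}
            \<and> prob {x\<in>space M. Y x + W x > u} > 0) at_top"
proof -
  define K' where "K' = (L + K) / 2"
  have "0 \<le> L" by (rule tendsto_lowerbound[OF lim]) auto
  then have "0 \<le> K'" "L < K'" "K' < K" using \<open>L < K\<close> by (simp_all add: K'_def)
  have "eventually (\<lambda>t. prob {x\<in>space M. Z x > t} / prob {x\<in>space M. W x > t} < K' \<and> t > 0) at_top"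
    by (intro eventually_conj order_tendstoD(2)[OF lim \<open>L < K'\<close>] eventually_gt_at_top)
  then obtain c where c: "\<And>t. t \<ge> c \<Longrightarrow>
      prob {x\<in>space M. Z x > t} / prob {x\<in>space M. W x > t} < K' \<and> t > 0"
    unfolding eventually_at_top_linorder by blast
  have dom: "prob {x\<in>space M. Z x > t} \<le> K' * prob {x\<in>space M. W x > t}" if "t \<ge> c" for t
    using c[OF that] W_pos by (auto simp: divide_less_eq less_imp_le)
  have "K - K' > 0" using \<open>K' < K\<close> by simp
  from shifted_tail_negligible[OF Y W indW P W_pos this] show ?thesis
  proof (rule eventually_mono)
    fix u
    assume "prob {x\<in>space M. Y x > u - c} \<le> (K - K') * prob {x\<in>space M. Y x + W x > u}
            \<and> prob {x\<in>space M. Y x + W x > u} > 0"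
    moreover have "prob {x\<in>space M. Y x + Z x > u}
        \<le> K' * prob {x\<in>space M. Y x + W x > u} + prob {x\<in>space M. Y x > u - c}"
      by (rule sum_tail_upper[OF Y Z W indZ indW \<open>0 \<le> K'\<close> dom])
    ultimately show "prob {x\<in>space M. Y x + Z x > u} \<le> K * prob {x\<in>space M. Y x + W x > u}
            \<and> prob {x\<in>space M. Y x + W x > u} > 0"
      by (simp add: algebra_simps)
  qed
qed

end

(* Main result: the limit 1 uses the transfer in both directions (the inverse
   ratio P(W > u)/P(Z > u) also tends to 1), the limit 0 only the upper one. *)
theorem lemma1:
  fixes M :: "'a measure" and Y Z W :: "'a \<Rightarrow> real"
  assumes "prob_space M"
    and "Y \<in> borel_measurable M" and "Z \<in> borel_measurable M" and "W \<in> borel_measurable M"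
    and "\<forall>u>0. measure M {x \<in> space M. Z x > u} > 0"
    and "\<forall>u>0. measure M {x \<in> space M. W x > u} > 0"
    and "prob_space.indep_var M borel Y borel Z"
    and "prob_space.indep_var M borel Y borel W"
    and "condition_P M Y"
  shows "(((\<lambda>u. measure M {x \<in> space M. Z x > u} / measure M {x \<in> space M. W x > u}) \<longlongrightarrow> 1) at_top
            \<longrightarrow> ((\<lambda>u. measure M {x \<in> space M. Y x + Z x > u} / measure M {x \<in> space M. Y x + W x > u}) \<longlongrightarrow> 1) at_top)
       \<and> (((\<lambda>u. measure M {x \<in> space M. Z x > u} / measure M {x \<in> space M. W x > u}) \<longlongrightarrow> 0) at_top
            \<longrightarrow> ((\<lambda>u. measure M {x \<in> space M. Y x + Z x > u} / measure M {x \<in> space M. Y x + W x > u}) \<longlongrightarrow> 0) at_top)"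
proof -
  note sum_bound = prob_space.sum_tail_bound[OF assms(1)]
  have one: "((\<lambda>u. measure M {x \<in> space M. Y x + Z x > u} / measure M {x \<in> space M. Y x + W x > u}) \<longlongrightarrow> 1) at_top"
    if lim: "((\<lambda>u. measure M {x \<in> space M. Z x > u} / measure M {x \<in> space M. W x > u}) \<longlongrightarrow> 1) at_top"
  proof -
    have lim_inv: "((\<lambda>u. measure M {x \<in> space M. W x > u} / measure M {x \<in> space M. Z x > u}) \<longlongrightarrow> 1) at_top"
      using tendsto_inverse[OF lim] by simp
    show ?thesis
      by (rule tendsto_ratio_one)
        (fact sum_bound[OF assms(2,3,4,7,8,9,6) lim], fact sum_bound[OF assms(2,4,3,8,7,9,5) lim_inv])
  qed
  have zero: "((\<lambda>u. measure M {x \<in> space M. Y x + Z x > u} / measure M {x \<in> space M. Y x + W x > u}) \<longlongrightarrow> 0) at_top"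
    if lim: "((\<lambda>u. measure M {x \<in> space M. Z x > u} / measure M {x \<in> space M. W x > u}) \<longlongrightarrow> 0) at_top"
    by (rule tendsto_ratio_zero) (fact sum_bound[OF assms(2,3,4,7,8,9,6) lim], simp)
  show ?thesis using one zero by blast
qed

end
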